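(* For every $F>0$ and every $v\in\mathcal U_0$, $$(E^{\rm ecc})'(Fx;v)=0,$$ where $E^{\rm ecc}(y)=\sum_{b\in\mathcal B,\ b\not\subset\Omega_c}e_b(y)+\sum_{b\in\mathcal B,\ b\subset\Omega_c}c_b(y)$.
   Context: One-dimensional setting. Fix integers $N\ge 1$, $R\ge 1$. Let $\Omega=(-N-R,N+R)$, $\Omega_c=(0,N)$, $\Omega_a=\Omega\setminus[0,N]$, $\mathcal I=\Omega\cap\mathbb Z$, $\mathcal I_a=\Omega_a\cap\mathbb Z$, $\mathcal I_D=\{i\in\mathbb Z: N\le |i|<N+R\}$. Let $\mathcal U$ be the set of real-valued functions $y$ on $\mathcal I_a\cup[0,N]$ whose restriction to $(0,N)$ lies in $W^{1,\infty}(0,N)$ (identified with its continuous representative on $[0,N]$); write $y_i=y(i)$. Let $\mathcal U_0=\{u\in\mathcal U: u_i=0 \text{ for all } i\in\mathcal I_D\}$. For $F\in\mathbb R$, $Fx$ denotes the element $y\in\mathcal U$ with $y(x)=Fx$. Let $\varphi:\mathbb R\to\mathbb R$ be continuously differentiable. A bond $(i,i+r)$ ($i\in\mathbb Z$, $r\ge1$) is the open interval from $i$ to $i+r$; $\mathcal B=\{(i,i+r): 1\le r\le R,\ i\in\mathcal I,\ i+r\in\mathcal I\}$. Exact contribution of $b=(i,i+r)$: $e_b(y)=\varphi(y_{i+r}-y_i)$. Continuum contribution: $c_b(y)=\frac1r\int_{b\cap\Omega_c}\varphi(r\,y'(x))\,dx$. For a functional $G$ on $\mathcal U$, $G'(y;v)=\frac{d}{dt}G(y+tv)\big|_{t=0}$.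 *)

theory Defs
  imports "HOL-Analysis.Analysis"
begin

definition Omega_c :: "nat \<Rightarrow> real set" where
  "Omega_c N = {0<..<real N}"

definition sites :: "nat \<Rightarrow> nat \<Rightarrow> int set" where
  "sites N R = {i::int. \<bar>i\<bar> < int N + int R}"

definition dirichlet_sites :: "nat \<Rightarrow> nat \<Rightarrow> int set" where
  "dirichlet_sites N R = {i::int. int N \<le> \<bar>i\<bar> \<and> \<bar>i\<bar> < int N + int R}"

text \<open>A bond (i,i+r) is encoded by the pair (i,r); it is the open interval from i to i+r.\<close>
definition bond_set :: "int \<times> nat \<Rightarrow> real set" where
  "bond_set b = {real_of_int (fst b)<..<real_of_int (fst b) + real (snd b)}"

definition bonds :: "nat \<Rightarrow> nat \<Rightarrow> (int \<times> nat) set" where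
  "bonds N R = {(i, r). 1 \<le> r \<and> r \<le> R \<and> i \<in> sites N R \<and> i + int r \<in> sites N R}"

text \<open>Admissible deformations U: functions on I_a \<union> [0,N] (represented as total
  functions real => real, of which only those values matter) whose restriction to (0,N)
  is W^{1,infinity}, i.e. (continuous representative) Lipschitz on [0,N].\<close>
definition adm :: "nat \<Rightarrow> (real \<Rightarrow> real) set" where
  "adm N = {y. \<exists>L. L-lipschitz_on {0..real N} y}"

definition adm0 :: "nat \<Rightarrow> nat \<Rightarrow> (real \<Rightarrow> real) set" where
  "adm0 N R = {u \<in> adm N. \<forall>i \<in> dirichlet_sites N R. u (real_of_int i) = 0}"

definition e_bond :: "(real \<Rightarrow> real) \<Rightarrow> (real \<Rightarrow> real) \<Rightarrow> int \<times> nat \<Rightarrow> real" where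
  "e_bond \<phi> y b = \<phi> (y (real_of_int (fst b) + real (snd b)) - y (real_of_int (fst b)))"

text \<open>Continuum contribution c_b(y) = 1/r \<integral>_{b \<inter> Omega_c} phi(r y'(x)) dx
  (y' the a.e. derivative of the Lipschitz function y).\<close>
definition c_bond :: "(real \<Rightarrow> real) \<Rightarrow> nat \<Rightarrow> (real \<Rightarrow> real) \<Rightarrow> int \<times> nat \<Rightarrow> real" where
  "c_bond \<phi> N y b = (1 / real (snd b)) *
     (LINT x : bond_set b \<inter> Omega_c N | lborel. \<phi> (real (snd b) * deriv y x))"

definition E_ecc :: "(real \<Rightarrow> real) \<Rightarrow> nat \<Rightarrow> nat \<Rightarrow> (real \<Rightarrow> real) \<Rightarrow> real" where
  "E_ecc \<phi> N R y =
     (\<Sum>b \<in> {b \<in> bonds N R. \<not> bond_set b \<subseteq> Omega_c N}. e_bond \<phi> y b)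
   + (\<Sum>b \<in> {b \<in> bonds N R. bond_set b \<subseteq> Omega_c N}. c_bond \<phi> N y b)"

end

theory Submission
  imports Defs
begin

(* Perturbing the linear deformation F x by t v, every bond b = (i,r) contributes
   to the derivative at t = 0 the same "bond variation"  phi'(F r) (v(i+r) - v(i)):
   for an exact bond this is the chain rule; for a continuum bond the energy is
   (1/r) times the integral over b of phi(r F + t r v'), which is differentiated under the
   integral sign and then integrated back with the fundamental theorem of calculus.
   Summing over all bonds, the increments of v telescope for each fixed bond length, and
   vanish because v is zero on the Dirichlet sites. *)

definition right_quot :: "(real \<Rightarrow> real) \<Rightarrow> real \<Rightarrow> real \<Rightarrow> real" where
  "right_quot f x h = (f (x + h) - f x) / h"

definition left_quot :: "(real \<Rightarrow> real) \<Rightarrow> real \<Rightarrow> real \<Rightarrow> real" where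
  "left_quot f x h = (f x - f (x - h)) / h"

lemma left_quot_eq_right_quot: "left_quot f x h = right_quot f (x - h) h"
  by (simp add: left_quot_def right_quot_def)

lemma frequently_at_right_0_iff:
  "(\<exists>\<^sub>F h in at_right (0::real). P h) \<longleftrightarrow> (\<forall>d>0. \<exists>h. 0 < h \<and> h < d \<and> P h)"
  unfolding frequently_def eventually_at_right_field by auto

lemma has_field_derivative_iff_quots:
  "(f has_field_derivative l) (at x) \<longleftrightarrow>
     (right_quot f x \<longlongrightarrow> l) (at_right 0) \<and> (left_quot f x \<longlongrightarrow> l) (at_right 0)"
proof -
  have at_left: "at_left x = filtermap (\<lambda>h. x - h) (at_right 0)"
  proof -
    have "at_left x = filtermap uminus (at_right (-x))" by (rule at_left_minus)
    also have "at_right (-x) = filtermap (\<lambda>h. h + -x) (at_right 0)" by (rule at_right_to_0)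
    finally show ?thesis by (simp add: filtermap_filtermap)
  qed
  have "(\<lambda>h. (f (x - h) - f x) / (x - h - x)) = left_quot f x"
    by (simp add: left_quot_def field_split_simps fun_eq_iff)
  moreover have "(\<lambda>h. (f (h + x) - f x) / (h + x - x)) = right_quot f x"
    by (simp add: right_quot_def add.commute fun_eq_iff)
  ultimately show ?thesis
    unfolding has_field_derivative_iff filterlim_at_split[of _ _ x]
      at_right_to_0[of x] at_left filterlim_filtermap
    by (simp only: o_def) auto
qed

lemma lipschitz_quot_bounds:
  assumes "K-lipschitz_on UNIV f" "h > 0"
  shows "\<bar>right_quot f x h\<bar> \<le> K" "\<bar>left_quot f x h\<bar> \<le> K"
proof -
  have "\<bar>f (y + h) - f y\<bar> \<le> K * h" for y
    using lipschitz_onD[OF assms(1), of "y + h" y] assms(2) by (simp add: dist_real_def)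
  then show "\<bar>right_quot f x h\<bar> \<le> K" for x
    using assms(2) by (simp add: right_quot_def abs_divide pos_divide_le_eq)
  then show "\<bar>left_quot f x h\<bar> \<le> K" by (simp add: left_quot_eq_right_quot)
qed

text \<open>For p < q such points
  witness that two Dini derivatives differ.\<close>
definition gap_LR :: "(real \<Rightarrow> real) \<Rightarrow> real \<Rightarrow> real \<Rightarrow> real set" where
  "gap_LR f p q = {x. (\<exists>\<^sub>F h in at_right 0. left_quot f x h < p) \<and>
                      (\<exists>\<^sub>F h in at_right 0. q < right_quot f x h)}"

definition gap_RL :: "(real \<Rightarrow> real) \<Rightarrow> real \<Rightarrow> real \<Rightarrow> real set" where
  "gap_RL f p q = {x. (\<exists>\<^sub>F h in at_right 0. right_quot f x h < p) \<and>
                      (\<exists>\<^sub>F h in at_right 0. q < left_quot f x h)}"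

lemma frequently_less_if_Liminf_less:
  fixes X :: "'a \<Rightarrow> real"
  assumes "Liminf F (\<lambda>h. ereal (X h)) < ereal p"
  shows "\<exists>\<^sub>F h in F. X h < p"
proof (rule ccontr)
  assume "\<not> (\<exists>\<^sub>F h in F. X h < p)"
  then have "\<forall>\<^sub>F h in F. ereal p \<le> ereal (X h)" by (simp add: not_frequently not_less)
  then have "ereal p \<le> Liminf F (\<lambda>h. ereal (X h))" by (rule Liminf_bounded)
  with assms show False by simp
qed

lemma frequently_greater_if_Limsup_greater:
  fixes X :: "'a \<Rightarrow> real"
  assumes "ereal q < Limsup F (\<lambda>h. ereal (X h))"
  shows "\<exists>\<^sub>F h in F. q < X h"
proof (rule ccontr)
  assume "\<not> (\<exists>\<^sub>F h in F. q < X h)"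
  then have "\<forall>\<^sub>F h in F. ereal (X h) \<le> ereal q" by (simp add: not_frequently not_less)
  then have "Limsup F (\<lambda>h. ereal (X h)) \<le> ereal q" by (rule Limsup_bounded)
  with assms show False by simp
qed

lemma Limsup_le_Liminf_if_no_rational_gap:
  fixes X Y :: "'a \<Rightarrow> real"
  assumes no_gap: "\<And>p q. p \<in> \<rat> \<Longrightarrow> q \<in> \<rat> \<Longrightarrow> p < q \<Longrightarrow>
      \<not> ((\<exists>\<^sub>F h in F. Y h < p) \<and> (\<exists>\<^sub>F h in F. q < X h))"
  shows "Limsup F (\<lambda>h. ereal (X h)) \<le> Liminf F (\<lambda>h. ereal (Y h))"
proof (rule ccontr)
  assume "\<not> ?thesis"
  then have gap: "Liminf F (\<lambda>h. ereal (Y h)) < Limsup F (\<lambda>h. ereal (X h))" by simp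
  obtain r where r: "Liminf F (\<lambda>h. ereal (Y h)) < ereal r" "ereal r < Limsup F (\<lambda>h. ereal (X h))"
    using ereal_dense2[OF gap] by blast
  obtain s where s: "r < s" "ereal s < Limsup F (\<lambda>h. ereal (X h))"
    using ereal_dense2[OF r(2)] by auto
  obtain p where p: "p \<in> \<rat>" "r < p" "p < s" using Rats_dense_in_real[OF s(1)] by blast
  obtain q where q: "q \<in> \<rat>" "p < q" "q < s" using Rats_dense_in_real[OF p(3)] by blast
  have "ereal r < ereal p" using p(2) by simp
  with r(1) have "Liminf F (\<lambda>h. ereal (Y h)) < ereal p" by (rule order.strict_trans)
  then have "\<exists>\<^sub>F h in F. Y h < p" by (rule frequently_less_if_Liminf_less)
  moreover have "ereal q < ereal s" using q(3) by simp
  then have "ereal q < Limsup F (\<lambda>h. ereal (X h))" using s(2) by (rule order.strict_trans)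
  then have "\<exists>\<^sub>F h in F. q < X h" by (rule frequently_greater_if_Limsup_greater)
  ultimately show False using no_gap[OF p(1) q(1) q(2)] by blast
qed

text \<open>A function with bounded difference quotients is differentiable at every point
  outside all rational gap sets: the four Dini derivatives are forced to coincide.\<close>
lemma differentiable_if_no_gap:
  assumes lip: "K-lipschitz_on UNIV f"
    and no_gap: "\<And>p q. p \<in> \<rat> \<Longrightarrow> q \<in> \<rat> \<Longrightarrow> p < q \<Longrightarrow> x \<notin> gap_LR f p q \<and> x \<notin> gap_RL f p q"
  shows "f differentiable (at x)"
proof -
  let ?F = "at_right (0::real)"
  let ?R = "\<lambda>h. ereal (right_quot f x h)" and ?L = "\<lambda>h. ereal (left_quot f x h)"
  have bounded: "\<forall>\<^sub>F h in ?F. \<bar>right_quot f x h\<bar> \<le> K"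
    using lipschitz_quot_bounds(1)[OF lip] by (auto simp: eventually_at_right_field intro!: exI[of _ 1])
  have RL: "Limsup ?F ?R \<le> Liminf ?F ?L"
    by (rule Limsup_le_Liminf_if_no_rational_gap) (use no_gap in \<open>auto simp: gap_LR_def\<close>)
  have LR: "Limsup ?F ?L \<le> Liminf ?F ?R"
    by (rule Limsup_le_Liminf_if_no_rational_gap) (use no_gap in \<open>auto simp: gap_RL_def\<close>)
  have "Liminf ?F ?R \<le> Limsup ?F ?R" "Liminf ?F ?L \<le> Limsup ?F ?L"
    by (simp_all add: Liminf_le_Limsup)
  then have eq: "Liminf ?F ?R = Limsup ?F ?R" "Liminf ?F ?L = Limsup ?F ?R" "Limsup ?F ?L = Limsup ?F ?R"
    using RL LR by auto
  have "Limsup ?F ?R \<le> ereal K"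
    by (rule Limsup_bounded) (use bounded in \<open>eventually_elim, auto\<close>)
  moreover have "ereal (- K) \<le> Liminf ?F ?R"
    by (rule Liminf_bounded) (use bounded in \<open>eventually_elim, auto\<close>)
  ultimately obtain l where l: "Limsup ?F ?R = ereal l"
    using eq(1) by (cases "Limsup ?F ?R") auto
  have "(?R \<longlongrightarrow> ereal l) ?F" "(?L \<longlongrightarrow> ereal l) ?F"
    by (rule Liminf_eq_Limsup; use eq l in simp)+
  then have "(f has_field_derivative l) (at x)"
    by (simp add: has_field_derivative_iff_quots lim_ereal)
  then show ?thesis by (auto simp: real_differentiable_def)
qed

lemma tendsto_le_if_frequently_less:
  fixes X :: "'a \<Rightarrow> real"
  assumes "(X \<longlongrightarrow> l) F" "\<exists>\<^sub>F h in F. X h < p"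
  shows "l \<le> p"
proof (rule ccontr)
  assume "\<not> l \<le> p"
  then have "\<forall>\<^sub>F h in F. p < X h" using assms(1) by (simp add: order_tendstoD(1))
  then show False using assms(2) by (simp add: frequently_def eventually_mono)
qed

lemma not_in_gap_if_differentiable:
  assumes "f differentiable (at x)" "p < q"
  shows "x \<notin> gap_LR f p q" "x \<notin> gap_RL f p q"
proof -
  obtain l where "(f has_field_derivative l) (at x)"
    using assms(1) by (auto simp: real_differentiable_def)
  then have R: "(right_quot f x \<longlongrightarrow> l) (at_right 0)" and L: "(left_quot f x \<longlongrightarrow> l) (at_right 0)"
    by (simp_all add: has_field_derivative_iff_quots)
  have no_gap: "\<not> ((\<exists>\<^sub>F h in at_right 0. X h < p) \<and> (\<exists>\<^sub>F h in at_right 0. q < Y h))"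
    if X: "(X \<longlongrightarrow> l) (at_right 0)" and Y: "(Y \<longlongrightarrow> l) (at_right 0)" for X Y :: "real \<Rightarrow> real"
  proof
    assume freq: "(\<exists>\<^sub>F h in at_right 0. X h < p) \<and> (\<exists>\<^sub>F h in at_right 0. q < Y h)"
    then have "l \<le> p" by (auto intro: tendsto_le_if_frequently_less[OF X])
    moreover have "- l \<le> - q"
      by (rule tendsto_le_if_frequently_less[OF tendsto_minus[OF Y]]) (use freq in simp)
    ultimately show False using assms(2) by simp
  qed
  show "x \<notin> gap_LR f p q" using no_gap[OF L R] by (simp add: gap_LR_def)
  show "x \<notin> gap_RL f p q" using no_gap[OF R L] by (simp add: gap_RL_def)
qed

text \<open>For a quantity continuous in the increment, a frequent strict inequality may be tested on
  rational increments only; this makes gap sets countable Boolean combinations of Borel sets.\<close>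
lemma frequently_at_right_0_rat:
  fixes G :: "real \<Rightarrow> real"
  assumes cont: "\<And>h. h > 0 \<Longrightarrow> isCont G h"
  shows "(\<exists>\<^sub>F h in at_right 0. G h < p) \<longleftrightarrow>
    (\<forall>n::nat. \<exists>h::rat. 0 < h \<and> real_of_rat h < 1 / real (Suc n) \<and> G (real_of_rat h) < p)"
  unfolding frequently_at_right_0_iff
proof
  assume fr: "\<forall>d>0. \<exists>h. 0 < h \<and> h < d \<and> G h < p"
  show "\<forall>n::nat. \<exists>h::rat. 0 < h \<and> real_of_rat h < 1 / real (Suc n) \<and> G (real_of_rat h) < p"
  proof
    fix n :: nat
    obtain h where h: "0 < h" "h < 1 / real (Suc n)" "G h < p"
      using fr by (metis of_nat_0_less_iff zero_less_Suc zero_less_divide_1_iff)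
    have "\<forall>\<^sub>F y in at h. G y < p"
      using cont[OF h(1)] h(3) by (metis isCont_def order_tendstoD(2))
    then obtain e where e: "e > 0" "\<And>y. y \<noteq> h \<Longrightarrow> dist y h < e \<Longrightarrow> G y < p"
      unfolding eventually_at by blast
    obtain r where r: "r \<in> \<rat>" "max 0 (h - e) < r" "r < h"
      using Rats_dense_in_real[of "max 0 (h - e)" h] h(1) e(1) by auto
    then obtain r' where r': "r = real_of_rat r'" using Rats_cases by blast
    show "\<exists>h::rat. 0 < h \<and> real_of_rat h < 1 / real (Suc n) \<and> G (real_of_rat h) < p"
    proof (intro exI conjI)
      show "0 < r'" using r(2) r' by (simp add: zero_less_of_rat_iff[symmetric])
      show "real_of_rat r' < 1 / real (Suc n)" using r(3) h(2) r' by simp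
      show "G (real_of_rat r') < p" using e(2)[of r] r r' by (auto simp: dist_real_def)
    qed
  qed
next
  assume H: "\<forall>n::nat. \<exists>h::rat. 0 < h \<and> real_of_rat h < 1 / real (Suc n) \<and> G (real_of_rat h) < p"
  show "\<forall>d>0. \<exists>h. 0 < h \<and> h < d \<and> G h < p"
  proof (intro allI impI)
    fix d :: real assume "0 < d"
    then obtain n where n: "inverse (real (Suc n)) < d" using reals_Archimedean by blast
    obtain h where h: "0 < h" "real_of_rat h < 1 / real (Suc n)" "G (real_of_rat h) < p"
      using H by blast
    show "\<exists>h. 0 < h \<and> h < d \<and> G h < p"
      using h n by (intro exI[of _ "real_of_rat h"]) (auto simp: inverse_eq_divide)
  qed
qed

lemma borel_frequently_at_right_0:
  fixes G :: "real \<Rightarrow> real \<Rightarrow> real"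
  assumes cont: "\<And>x h. h > 0 \<Longrightarrow> isCont (G x) h"
    and meas: "\<And>h. (\<lambda>x. G x h) \<in> borel_measurable borel"
  shows "{x. \<exists>\<^sub>F h in at_right 0. G x h < p} \<in> sets borel"
proof -
  note meas[measurable]
  have "{x. \<exists>\<^sub>F h in at_right 0. G x h < p} =
      {x. \<forall>n::nat. \<exists>h::rat. 0 < h \<and> real_of_rat h < 1 / real (Suc n) \<and> G x (real_of_rat h) < p}"
    using frequently_at_right_0_rat[OF cont] by blast
  also have "\<dots> \<in> sets borel" by measurable
  finally show ?thesis .
qed

lemma gap_sets_borel:
  assumes cont: "continuous_on UNIV f"
  shows "gap_LR f p q \<in> sets borel" "gap_RL f p q \<in> sets borel"
proof -
  have [measurable]: "f \<in> borel_measurable borel" using cont by (rule borel_measurable_continuous_onI)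
  have shift: "isCont (\<lambda>h. f (x + h)) h" "isCont (\<lambda>h. f (x - h)) h" for x h
    by (rule continuous_on_interior[of UNIV], rule continuous_on_compose2[OF cont],
        auto intro: continuous_intros)+
  have R: "{x. \<exists>\<^sub>F h in at_right 0. s * right_quot f x h < t} \<in> sets borel" for s t
    by (rule borel_frequently_at_right_0)
      (use shift(1) in \<open>auto simp: right_quot_def intro!: continuous_intros\<close>)
  have L: "{x. \<exists>\<^sub>F h in at_right 0. s * left_quot f x h < t} \<in> sets borel" for s t
    by (rule borel_frequently_at_right_0)
      (use shift(2) in \<open>auto simp: left_quot_def intro!: continuous_intros\<close>)
  show "gap_LR f p q \<in> sets borel"
    unfolding gap_LR_def Collect_conj_eq using sets.Int[OF L[of 1 p] R[of "-1" "-q"]] by simp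
  show "gap_RL f p q \<in> sets borel"
    unfolding gap_RL_def Collect_conj_eq using sets.Int[OF R[of 1 p] L[of "-1" "-q"]] by simp
qed

lemma lipschitz_nondiff_eq_gaps:
  assumes lip: "K-lipschitz_on UNIV f"
  shows "{x. \<not> f differentiable (at x)} =
    (\<Union>p::rat. \<Union>q \<in> {q. p < q}.
       gap_LR f (real_of_rat p) (real_of_rat q) \<union> gap_RL f (real_of_rat p) (real_of_rat q))"
proof (intro equalityI subsetI)
  fix x assume "x \<in> {x. \<not> f differentiable (at x)}"
  then obtain p q where pq: "p \<in> \<rat>" "q \<in> \<rat>" "p < q" "x \<in> gap_LR f p q \<or> x \<in> gap_RL f p q"
    using differentiable_if_no_gap[OF lip, of x] by blast
  obtain p' q' where "p = real_of_rat p'" "q = real_of_rat q'" using pq(1,2) Rats_cases by metis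
  with pq show "x \<in> (\<Union>p::rat. \<Union>q \<in> {q. p < q}.
       gap_LR f (real_of_rat p) (real_of_rat q) \<union> gap_RL f (real_of_rat p) (real_of_rat q))"
    by (auto simp: of_rat_less)
qed (use not_in_gap_if_differentiable[of f _ "real_of_rat _" "real_of_rat _"] in
     \<open>auto simp: of_rat_less\<close>)

lemma vitali_intervals:
  fixes T :: "real set" and P :: "real \<Rightarrow> real \<Rightarrow> bool"
  assumes cov: "\<And>x d. x \<in> T \<Longrightarrow> d > 0 \<Longrightarrow>
      \<exists>u w. u \<le> x \<and> x \<le> w \<and> u < w \<and> w - u < d \<and> P u w"
  obtains C where "countable C" "\<And>i. i \<in> C \<Longrightarrow> fst i < snd i \<and> P (fst i) (snd i)"
    "disjoint_family_on (\<lambda>i. {fst i..snd i}) C" "negligible (T - (\<Union>i\<in>C. {fst i..snd i}))"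
proof -
  define K where "K = {i::real \<times> real. fst i < snd i \<and> P (fst i) (snd i)}"
  define rad where "rad i = (snd i - fst i) / 2" for i :: "real \<times> real"
  define mid where "mid i = (fst i + snd i) / 2" for i :: "real \<times> real"
  have ball_eq: "cball (mid i) (rad i) = {fst i..snd i}" for i
    by (simp add: cball_eq_atLeastAtMost mid_def rad_def field_simps)
  obtain C where C: "countable C" "C \<subseteq> K"
     "pairwise (\<lambda>i j. disjnt (cball (mid i) (rad i)) (cball (mid j) (rad j))) C"
     "negligible (T - (\<Union>i \<in> C. cball (mid i) (rad i)))"
  proof (rule Vitali_covering_theorem_cballs[of K rad T mid])
    show "\<And>i. i \<in> K \<Longrightarrow> 0 < rad i" by (auto simp: K_def rad_def)
    fix x and d :: real assume "x \<in> T" "0 < d"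
    then obtain u w where uw: "u \<le> x" "x \<le> w" "u < w" "w - u < d" "P u w" using cov by blast
    moreover have "x \<in> cball (mid (u, w)) (rad (u, w))" unfolding ball_eq using uw by simp
    ultimately show "\<exists>i. i \<in> K \<and> x \<in> cball (mid i) (rad i) \<and> rad i < d"
      by (intro exI[of _ "(u, w)"]) (auto simp: K_def rad_def)
  qed
  show ?thesis
  proof (rule that[OF C(1)])
    show "\<And>i. i \<in> C \<Longrightarrow> fst i < snd i \<and> P (fst i) (snd i)" using C(2) by (auto simp: K_def)
    show "disjoint_family_on (\<lambda>i. {fst i..snd i}) C"
      using C(3) unfolding disjoint_family_on_def pairwise_def disjnt_def ball_eq by blast
    show "negligible (T - (\<Union>i\<in>C. {fst i..snd i}))" using C(4) by (simp add: ball_eq)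
  qed
qed

lemma negligible_countable:
  fixes S :: "real set"
  assumes "countable S"
  shows "negligible S"
proof -
  have "negligible (\<Union>x\<in>S. {x})" using assms by (intro negligible_countable_Union) auto
  then show ?thesis by simp
qed

lemma emeasure_disjoint_intervals:
  fixes a b :: "'i \<Rightarrow> real"
  assumes "countable C" "\<And>i. i \<in> C \<Longrightarrow> a i \<le> b i" "disjoint_family_on (\<lambda>i. {a i..b i}) C"
  shows "emeasure lebesgue (\<Union>i\<in>C. {a i..b i}) = (\<integral>\<^sup>+i. ennreal (b i - a i) \<partial>count_space C)"
proof -
  have "emeasure lebesgue (\<Union>i\<in>C. {a i..b i}) = (\<integral>\<^sup>+i. emeasure lebesgue {a i..b i} \<partial>count_space C)"
    by (rule emeasure_UN_countable) (use assms in auto)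
  also have "\<dots> = (\<integral>\<^sup>+i. ennreal (b i - a i) \<partial>count_space C)"
    by (rule nn_integral_cong) (use assms(2) in \<open>simp add: emeasure_lborel_Icc\<close>)
  finally show ?thesis .
qed

lemma strict_mono_image_intervals_disjoint:
  fixes g :: "real \<Rightarrow> real"
  assumes mono: "strict_mono g" and lt: "\<And>i. i \<in> C \<Longrightarrow> fst i < snd i"
    and disj: "disjoint_family_on (\<lambda>i. {fst i..snd i}) C"
  shows "disjoint_family_on (\<lambda>i. {g (fst i)..g (snd i)}) C"
  unfolding disjoint_family_on_def
proof (intro ballI impI)
  fix i j assume ij: "i \<in> C" "j \<in> C" "i \<noteq> j"
  have "snd i < fst j \<or> snd j < fst i"
  proof (rule ccontr)
    assume "\<not> (snd i < fst j \<or> snd j < fst i)"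
    then have "max (fst i) (fst j) \<in> {fst i..snd i} \<inter> {fst j..snd j}"
      using lt[OF ij(1)] lt[OF ij(2)] by auto
    then show False using disj ij by (auto simp: disjoint_family_on_def)
  qed
  then have "g (snd i) < g (fst j) \<or> g (snd j) < g (fst i)" using mono by (auto simp: strict_mono_less)
  then show "{g (fst i)..g (snd i)} \<inter> {g (fst j)..g (snd j)} = {}" by auto
qed

lemma emeasure_image_intervals:
  fixes g :: "real \<Rightarrow> real" and C :: "(real \<times> real) set"
  assumes mono: "strict_mono g" and C: "countable C" "\<And>i. i \<in> C \<Longrightarrow> fst i < snd i"
    "disjoint_family_on (\<lambda>i. {fst i..snd i}) C"
  shows "emeasure lebesgue (\<Union>i\<in>C. {g (fst i)..g (snd i)}) =
    (\<integral>\<^sup>+i. ennreal (g (snd i) - g (fst i)) \<partial>count_space C)"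
proof (rule emeasure_disjoint_intervals[OF C(1)])
  show "g (fst i) \<le> g (snd i)" if "i \<in> C" for i
    using mono C(2)[OF that] by (simp add: strict_mono_less_eq)
qed (rule strict_mono_image_intervals_disjoint[OF mono C(2,3)])

lemma image_intervals_measure_le:
  fixes g :: "real \<Rightarrow> real" and C :: "(real \<times> real) set"
  assumes mono: "strict_mono g" and C: "countable C" "\<And>i. i \<in> C \<Longrightarrow> fst i < snd i"
    "disjoint_family_on (\<lambda>i. {fst i..snd i}) C"
    and slope: "\<And>i. i \<in> C \<Longrightarrow> g (snd i) - g (fst i) \<le> p * (snd i - fst i)" and p: "0 \<le> p"
  shows "emeasure lebesgue (\<Union>i\<in>C. {g (fst i)..g (snd i)}) \<le>
    ennreal p * emeasure lebesgue (\<Union>i\<in>C. {fst i..snd i})"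
proof -
  have "(\<integral>\<^sup>+i. ennreal (g (snd i) - g (fst i)) \<partial>count_space C) \<le>
      (\<integral>\<^sup>+i. ennreal p * ennreal (snd i - fst i) \<partial>count_space C)"
  proof (rule nn_integral_mono)
    fix i assume "i \<in> space (count_space C)"
    then have i: "i \<in> C" by simp
    have "ennreal (g (snd i) - g (fst i)) \<le> ennreal (p * (snd i - fst i))"
      using slope[OF i] by (rule ennreal_leI)
    also have "\<dots> = ennreal p * ennreal (snd i - fst i)" using p C(2)[OF i] by (simp add: ennreal_mult)
    finally show "ennreal (g (snd i) - g (fst i)) \<le> ennreal p * ennreal (snd i - fst i)" .
  qed
  then show ?thesis
    by (simp add: emeasure_image_intervals[OF mono C] nn_integral_cmult
        emeasure_disjoint_intervals[OF C(1) less_imp_le[OF C(2)] C(3)])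
qed

lemma image_intervals_measure_ge:
  fixes g :: "real \<Rightarrow> real" and C :: "(real \<times> real) set"
  assumes mono: "strict_mono g" and C: "countable C" "\<And>i. i \<in> C \<Longrightarrow> fst i < snd i"
    "disjoint_family_on (\<lambda>i. {fst i..snd i}) C"
    and slope: "\<And>i. i \<in> C \<Longrightarrow> q * (snd i - fst i) \<le> g (snd i) - g (fst i)" and q: "0 \<le> q"
  shows "ennreal q * emeasure lebesgue (\<Union>i\<in>C. {fst i..snd i}) \<le>
    emeasure lebesgue (\<Union>i\<in>C. {g (fst i)..g (snd i)})"
proof -
  have "(\<integral>\<^sup>+i. ennreal q * ennreal (snd i - fst i) \<partial>count_space C) \<le>
      (\<integral>\<^sup>+i. ennreal (g (snd i) - g (fst i)) \<partial>count_space C)"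
  proof (rule nn_integral_mono)
    fix i assume "i \<in> space (count_space C)"
    then have i: "i \<in> C" by simp
    have "ennreal q * ennreal (snd i - fst i) = ennreal (q * (snd i - fst i))"
      using q C(2)[OF i] by (simp add: ennreal_mult)
    also have "\<dots> \<le> ennreal (g (snd i) - g (fst i))" using slope[OF i] by (rule ennreal_leI)
    finally show "ennreal q * ennreal (snd i - fst i) \<le> ennreal (g (snd i) - g (fst i))" .
  qed
  then show ?thesis
    by (simp add: emeasure_image_intervals[OF mono C] nn_integral_cmult
        emeasure_disjoint_intervals[OF C(1) less_imp_le[OF C(2)] C(3)])
qed

lemma left_quot_vitali_cover:
  fixes g :: "real \<Rightarrow> real"
  assumes E: "\<And>x. x \<in> E \<Longrightarrow> \<exists>\<^sub>F h in at_right 0. left_quot g x h < p"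
    and W: "open W" "E \<subseteq> W"
  obtains C where "countable C" "disjoint_family_on (\<lambda>i. {fst i..snd i}) C"
    "\<And>i. i \<in> C \<Longrightarrow> fst i < snd i \<and> ({fst i..snd i} \<subseteq> W \<and> g (snd i) - g (fst i) \<le> p * (snd i - fst i))"
    "negligible (E - (\<Union>i\<in>C. {fst i<..<snd i}))"
proof -
  have "\<exists>u w. u \<le> x \<and> x \<le> w \<and> u < w \<and> w - u < d \<and> ({u..w} \<subseteq> W \<and> g w - g u \<le> p * (w - u))"
    if x: "x \<in> E" "d > 0" for x d :: real
  proof -
    obtain \<delta> where \<delta>: "\<delta> > 0" "ball x \<delta> \<subseteq> W" using W x(1) openE by blast
    obtain h where h: "0 < h" "h < min d \<delta>" "left_quot g x h < p"
      using E[OF x(1)] unfolding frequently_at_right_0_iff using \<delta>(1) x(2) by (meson min_less_iff_conj)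
    have "{x - h..x} \<subseteq> ball x \<delta>" using h by (auto simp: dist_real_def)
    moreover have "g x - g (x - h) \<le> p * h"
      using h(1,3) by (simp add: left_quot_def pos_divide_less_eq less_imp_le mult.commute)
    ultimately show ?thesis using h \<delta> by (intro exI[of _ "x - h"] exI[of _ x]) auto
  qed
  then obtain C where C: "countable C"
      "\<And>i. i \<in> C \<Longrightarrow> fst i < snd i \<and> ({fst i..snd i} \<subseteq> W \<and> g (snd i) - g (fst i) \<le> p * (snd i - fst i))"
      "disjoint_family_on (\<lambda>i. {fst i..snd i}) C" "negligible (E - (\<Union>i\<in>C. {fst i..snd i}))"
    by (rule vitali_intervals) blast+
  moreover have "negligible (E - (\<Union>i\<in>C. {fst i<..<snd i}))"
  proof (rule negligible_subset)
    show "negligible ((E - (\<Union>i\<in>C. {fst i..snd i})) \<union> (fst ` C \<union> snd ` C))"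
      using C(1) by (intro negligible_Un[OF C(4)] negligible_countable) auto
    show "E - (\<Union>i\<in>C. {fst i<..<snd i}) \<subseteq> (E - (\<Union>i\<in>C. {fst i..snd i})) \<union> (fst ` C \<union> snd ` C)"
      by force
  qed
  ultimately show ?thesis using that by blast
qed

lemma right_quot_vitali_cover:
  fixes g :: "real \<Rightarrow> real" and D :: "(real \<times> real) set"
  assumes E: "\<And>x. x \<in> E \<Longrightarrow> \<exists>\<^sub>F h in at_right 0. q < right_quot g x h"
    and inside: "E \<subseteq> (\<Union>j\<in>D. {fst j<..<snd j})"
  obtains C where "countable C" "disjoint_family_on (\<lambda>i. {fst i..snd i}) C"
    "\<And>i. i \<in> C \<Longrightarrow> fst i < snd i \<and> (q * (snd i - fst i) \<le> g (snd i) - g (fst i) \<and>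
       (\<exists>j\<in>D. fst j < fst i \<and> snd i < snd j))"
    "negligible (E - (\<Union>i\<in>C. {fst i..snd i}))"
proof -
  have "\<exists>u w. u \<le> y \<and> y \<le> w \<and> u < w \<and> w - u < d \<and>
      (q * (w - u) \<le> g w - g u \<and> (\<exists>j\<in>D. fst j < u \<and> w < snd j))" if y: "y \<in> E" "d > 0" for y d :: real
  proof -
    obtain j where j: "j \<in> D" "fst j < y" "y < snd j" using inside y(1) by auto
    obtain h where h: "0 < h" "h < min d (snd j - y)" "q < right_quot g y h"
      using E[OF y(1)] unfolding frequently_at_right_0_iff using j y(2)
      by (metis diff_gt_0_iff_gt min_less_iff_conj)
    have "q * h \<le> g (y + h) - g y"
      using h(1,3) by (simp add: right_quot_def pos_less_divide_eq less_imp_le mult.commute)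
    then show ?thesis using h j by (intro exI[of _ y] exI[of _ "y + h"]) auto
  qed
  then obtain C where "countable C"
      "\<And>i. i \<in> C \<Longrightarrow> fst i < snd i \<and> (q * (snd i - fst i) \<le> g (snd i) - g (fst i) \<and>
         (\<exists>j\<in>D. fst j < fst i \<and> snd i < snd j))"
      "disjoint_family_on (\<lambda>i. {fst i..snd i}) C" "negligible (E - (\<Union>i\<in>C. {fst i..snd i}))"
    by (rule vitali_intervals) blast+
  then show ?thesis using that by blast
qed

text \<open>Cover E by a family C1 of intervals inside W on which g
  has slope at most p, then cover E again by a finer family C2, subordinate to C1, on which
  g has slope at least q. Since g is increasing, the image of C2 lies in the image of C1, and
  comparing measures gives q |E| \<le> |g(C2)| \<le> |g(C1)| \<le> p |W|.\<close>
lemma monotone_gap_estimate: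
  fixes g :: "real \<Rightarrow> real"
  assumes mono: "strict_mono g" and pq: "0 \<le> p" "0 \<le> q"
    and E: "E \<in> sets lebesgue" "E \<subseteq> gap_LR g p q" and W: "open W" "E \<subseteq> W"
  shows "ennreal q * emeasure lebesgue E \<le> ennreal p * emeasure lebesgue W"
proof -
  obtain C1 where C1: "countable C1" "disjoint_family_on (\<lambda>i. {fst i..snd i}) C1"
      "\<And>i. i \<in> C1 \<Longrightarrow> fst i < snd i \<and> ({fst i..snd i} \<subseteq> W \<and> g (snd i) - g (fst i) \<le> p * (snd i - fst i))"
      "negligible (E - (\<Union>i\<in>C1. {fst i<..<snd i}))"
    by (rule left_quot_vitali_cover[OF _ W]) (use E(2) in \<open>auto simp: gap_LR_def\<close>)
  define V where "V = (\<Union>i\<in>C1. {fst i<..<snd i})"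
  obtain C2 where C2: "countable C2" "disjoint_family_on (\<lambda>i. {fst i..snd i}) C2"
      "\<And>i. i \<in> C2 \<Longrightarrow> fst i < snd i \<and> (q * (snd i - fst i) \<le> g (snd i) - g (fst i) \<and>
         (\<exists>j\<in>C1. fst j < fst i \<and> snd i < snd j))"
      "negligible ((E \<inter> V) - (\<Union>i\<in>C2. {fst i..snd i}))"
    by (rule right_quot_vitali_cover[of "E \<inter> V" q g C1]) (use E(2) in \<open>auto simp: gap_LR_def V_def\<close>)
  have "E - (\<Union>i\<in>C2. {fst i..snd i}) \<subseteq> (E - V) \<union> ((E \<inter> V) - (\<Union>i\<in>C2. {fst i..snd i}))" by blast
  then have "negligible (E - (\<Union>i\<in>C2. {fst i..snd i}))"
    using C1(4) C2(4) unfolding V_def by (meson negligible_Un negligible_subset)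
  then have "E - (\<Union>i\<in>C2. {fst i..snd i}) \<in> null_sets lebesgue"
    by (simp add: negligible_iff_null_sets)
  from AE_not_in[OF this] have "AE x in lebesgue. x \<in> E \<longrightarrow> x \<in> (\<Union>i\<in>C2. {fst i..snd i})"
    by eventually_elim blast
  then have "emeasure lebesgue E \<le> emeasure lebesgue (\<Union>i\<in>C2. {fst i..snd i})"
    using C2(1) by (intro emeasure_mono_AE sets.countable_UN') auto
  then have "ennreal q * emeasure lebesgue E \<le> ennreal q * emeasure lebesgue (\<Union>i\<in>C2. {fst i..snd i})"
    by (rule mult_left_mono) simp
  also have "\<dots> \<le> emeasure lebesgue (\<Union>i\<in>C2. {g (fst i)..g (snd i)})"
    using C2 pq(2) by (intro image_intervals_measure_ge[OF mono]) auto
  also have "\<dots> \<le> emeasure lebesgue (\<Union>i\<in>C1. {g (fst i)..g (snd i)})"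
  proof (rule emeasure_mono)
    show "(\<Union>i\<in>C2. {g (fst i)..g (snd i)}) \<subseteq> (\<Union>i\<in>C1. {g (fst i)..g (snd i)})"
    proof
      fix z assume "z \<in> (\<Union>i\<in>C2. {g (fst i)..g (snd i)})"
      then obtain i where i: "i \<in> C2" "z \<in> {g (fst i)..g (snd i)}" by auto
      then obtain j where j: "j \<in> C1" "fst j < fst i" "snd i < snd j" using C2(3) by blast
      then have "g (fst j) \<le> g (fst i)" "g (snd i) \<le> g (snd j)"
        using mono by (auto simp: strict_mono_less_eq)
      then show "z \<in> (\<Union>i\<in>C1. {g (fst i)..g (snd i)})" using i j(1) by (intro UN_I[of j]) auto
    qed
  qed (use C1(1) in auto)
  also have "\<dots> \<le> ennreal p * emeasure lebesgue (\<Union>i\<in>C1. {fst i..snd i})"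
    using C1 pq(1) by (intro image_intervals_measure_le[OF mono]) auto
  also have "\<dots> \<le> ennreal p * emeasure lebesgue W"
    using C1(3) W(1) by (intro mult_left_mono emeasure_mono) auto
  finally show ?thesis .
qed

text \<open>By outer regularity, the estimate holds with W arbitrarily close to E in measure.\<close>
lemma monotone_gap_measure:
  fixes g :: "real \<Rightarrow> real"
  assumes mono: "strict_mono g" and pq: "0 \<le> p" "0 \<le> q"
    and E: "E \<in> lmeasurable" "E \<subseteq> gap_LR g p q"
  shows "q * measure lebesgue E \<le> p * measure lebesgue E"
proof -
  define s where "s = measure lebesgue E"
  have s: "emeasure lebesgue E = ennreal s" "0 \<le> s"
    using E(1) by (simp_all add: s_def emeasure_eq_measure2)
  have estimate: "q * s \<le> p * (s + e)" if e: "e > 0" for e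
  proof -
    obtain U where U: "open U" "E \<subseteq> U" "U - E \<in> lmeasurable" "emeasure lebesgue (U - E) < ennreal e"
      using sets_lebesgue_outer_open[OF fmeasurableD[OF E(1)] e] by metis
    have "emeasure lebesgue U = emeasure lebesgue (E \<union> (U - E))"
      using U(2) by (simp add: Un_absorb1)
    also have "\<dots> \<le> emeasure lebesgue E + emeasure lebesgue (U - E)"
      using U(3) E(1) by (intro emeasure_subadditive) auto
    also have "\<dots> \<le> ennreal s + ennreal e"
      unfolding s(1) using U(4) by (intro add_left_mono less_imp_le)
    finally have U_small: "emeasure lebesgue U \<le> ennreal (s + e)" using s(2) e by simp
    have "ennreal q * ennreal s \<le> ennreal p * emeasure lebesgue U"
      using monotone_gap_estimate[OF mono pq fmeasurableD[OF E(1)] E(2) U(1,2)] s(1) by simp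
    also have "\<dots> \<le> ennreal p * ennreal (s + e)" using U_small by (rule mult_left_mono) simp
    finally have "ennreal (q * s) \<le> ennreal (p * (s + e))" using pq s(2) e by (simp add: ennreal_mult)
    then show ?thesis using pq s(2) e by (simp add: ennreal_le_iff)
  qed
  show "q * measure lebesgue E \<le> p * measure lebesgue E" unfolding s_def[symmetric]
  proof (rule field_le_epsilon)
    fix e :: real assume "0 < e"
    then have "q * s \<le> p * (s + e / (p + 1))" using pq by (intro estimate) simp
    also have "\<dots> \<le> p * s + e" using pq \<open>0 < e\<close> by (simp add: distrib_left field_simps)
    finally show "q * s \<le> p * s + e" .
  qed
qed

text \<open>For a continuous increasing function the gap sets with 0 \<le> p < q are null: on each
  bounded piece the previous estimate forces measure zero.\<close>
lemma monotone_gap_negligible: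
  fixes g :: "real \<Rightarrow> real"
  assumes cont: "continuous_on UNIV g" and mono: "strict_mono g" and pq: "0 \<le> p" "p < q"
  shows "negligible (gap_LR g p q)"
proof -
  have bounded_part: "negligible (gap_LR g p q \<inter> {-n<..<n})" for n :: real
  proof -
    have "gap_LR g p q \<inter> {-n<..<n} \<in> sets lebesgue" using gap_sets_borel(1)[OF cont] by simp
    then have E: "gap_LR g p q \<inter> {-n<..<n} \<in> lmeasurable"
      by (rule bounded_set_imp_lmeasurable[rotated]) (auto intro: bounded_subset[of "{-n<..<n}"])
    have "(q - p) * measure lebesgue (gap_LR g p q \<inter> {-n<..<n}) \<le> 0"
      using monotone_gap_measure[OF mono pq(1) _ E] pq by (simp add: algebra_simps)
    then have "measure lebesgue (gap_LR g p q \<inter> {-n<..<n}) = 0"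
      using pq by (simp add: mult_le_0_iff measure_nonneg antisym)
    then show ?thesis using negligible_iff_measure0[OF E] by simp
  qed
  have exhaust: "gap_LR g p q = (\<Union>n. gap_LR g p q \<inter> {-real n<..<real n})"
  proof (intro equalityI subsetI)
    fix x assume x: "x \<in> gap_LR g p q"
    obtain n where "\<bar>x\<bar> < real n" using reals_Archimedean2 by blast
    then show "x \<in> (\<Union>n. gap_LR g p q \<inter> {-real n<..<real n})"
      using x by (intro UN_I[of n]) (auto simp: abs_less_iff)
  qed auto
  show ?thesis by (subst exhaust) (rule negligible_Union_nat[OF bounded_part])
qed

lemma gap_LR_add_linear: "gap_LR (\<lambda>x. f x + c * x) (p + c) (q + c) = gap_LR f p q"
proof -
  have "\<forall>\<^sub>F h in at_right (0::real). 0 < h" by (rule eventually_at_right_less)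
  moreover have "left_quot (\<lambda>x. f x + c * x) x h = left_quot f x h + c"
      "right_quot (\<lambda>x. f x + c * x) x h = right_quot f x h + c" if "0 < h" for x h :: real
    using that by (simp_all add: left_quot_def right_quot_def field_simps)
  ultimately have "(\<exists>\<^sub>F h in at_right 0. left_quot (\<lambda>x. f x + c * x) x h < p + c) \<longleftrightarrow>
        (\<exists>\<^sub>F h in at_right 0. left_quot f x h < p)"
      "(\<exists>\<^sub>F h in at_right 0. q + c < right_quot (\<lambda>x. f x + c * x) x h) \<longleftrightarrow>
        (\<exists>\<^sub>F h in at_right 0. q < right_quot f x h)" for x
    by (auto intro!: frequently_cong)
  then show ?thesis by (simp add: gap_LR_def)
qed

lemma gap_RL_reflect: "gap_RL f p q = uminus ` gap_LR (\<lambda>x. - f (- x)) p q"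
proof -
  have "left_quot (\<lambda>x. - f (- x)) (- x) h = right_quot f x h"
      "right_quot (\<lambda>x. - f (- x)) (- x) h = left_quot f x h" for x h
    by (simp_all add: left_quot_def right_quot_def algebra_simps)
  then have reflect: "x \<in> gap_RL f p q \<longleftrightarrow> - x \<in> gap_LR (\<lambda>x. - f (- x)) p q" for x
    by (simp add: gap_LR_def gap_RL_def)
  show ?thesis
  proof (intro equalityI subsetI)
    fix x assume "x \<in> gap_RL f p q"
    then have "- x \<in> gap_LR (\<lambda>x. - f (- x)) p q" using reflect by blast
    then show "x \<in> uminus ` gap_LR (\<lambda>x. - f (- x)) p q" by (rule rev_image_eqI) simp
  qed (auto simp: reflect)
qed

text \<open>For a K-Lipschitz f, adding (K+1)x makes the function strictly increasing and shifts the
  thresholds to nonnegative values, so the monotone case applies; for p < -K the set is empty.\<close>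
lemma lipschitz_gap_LR_negligible:
  assumes lip: "K-lipschitz_on UNIV f" and pq: "p < q"
  shows "negligible (gap_LR f p q)"
proof (cases "p < - K")
  case True
  have "gap_LR f p q = {}"
  proof (rule ccontr)
    assume "gap_LR f p q \<noteq> {}"
    then obtain x where "\<exists>\<^sub>F h in at_right 0. left_quot f x h < p" by (auto simp: gap_LR_def)
    then obtain h where "0 < h" "left_quot f x h < p"
      unfolding frequently_at_right_0_iff by (meson zero_less_one)
    with lipschitz_quot_bounds(2)[OF lip, of h x] True show False by linarith
  qed
  then show ?thesis by simp
next
  case False
  define g where "g = (\<lambda>x. f x + (K + 1) * x)"
  have "continuous_on UNIV g"
    unfolding g_def by (intro continuous_intros lipschitz_on_continuous_on[OF lip])
  moreover have "strict_mono g"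
  proof (rule strict_monoI)
    fix x y :: real assume "x < y"
    moreover have "f x - f y \<le> K * (y - x)"
      using lipschitz_onD[OF lip, of y x] \<open>x < y\<close> by (simp add: dist_real_def abs_le_iff)
    ultimately show "g x < g y" by (simp add: g_def algebra_simps)
  qed
  ultimately have "negligible (gap_LR g (p + (K + 1)) (q + (K + 1)))"
    using False pq by (intro monotone_gap_negligible) auto
  then show ?thesis unfolding g_def gap_LR_add_linear .
qed

text \<open>The other gap sets reduce to the first kind by reflection, which preserves null sets.\<close>
lemma lipschitz_gap_RL_negligible:
  assumes lip: "K-lipschitz_on UNIV f" and pq: "p < q"
  shows "negligible (gap_RL f p q)"
proof -
  have "K-lipschitz_on UNIV (\<lambda>x. - f (- x))"
  proof (rule lipschitz_onI)
    fix x y :: real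
    have "dist (f (- x)) (f (- y)) \<le> K * dist (- x) (- y)" using lipschitz_onD[OF lip] by blast
    then show "dist (- f (- x)) (- f (- y)) \<le> K * dist x y" by (simp add: dist_minus)
  qed (rule lipschitz_on_nonneg[OF lip])
  then have "negligible (gap_LR (\<lambda>x. - f (- x)) p q)" using pq by (rule lipschitz_gap_LR_negligible)
  then show ?thesis unfolding gap_RL_reflect
    by (rule negligible_differentiable_image_negligible[OF order_refl])
      (auto intro: derivative_intros)
qed

theorem lipschitz_nondiff_null:
  fixes f :: "real \<Rightarrow> real"
  assumes lip: "K-lipschitz_on UNIV f"
  shows "{x. \<not> f differentiable (at x)} \<in> null_sets lborel"
proof -
  let ?Q = "\<lambda>p q. gap_LR f (real_of_rat p) (real_of_rat q) \<union> gap_RL f (real_of_rat p) (real_of_rat q)"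
  have cont: "continuous_on UNIV f" by (rule lipschitz_on_continuous_on[OF lip])
  have "negligible (?Q p q)" if "p < q" for p q
    using that by (intro negligible_Un lipschitz_gap_LR_negligible[OF lip]
        lipschitz_gap_RL_negligible[OF lip]) (simp_all add: of_rat_less)
  then have "negligible (\<Union>q \<in> {q. p < q}. ?Q p q)" for p
    by (intro negligible_countable_Union) auto
  then have "negligible (\<Union>p::rat. \<Union>q \<in> {q. p < q}. ?Q p q)"
    by (intro negligible_countable_Union) auto
  moreover have "(\<Union>p::rat. \<Union>q \<in> {q. p < q}. ?Q p q) \<in> sets borel"
    by (intro sets.countable_UN'' sets.Un gap_sets_borel[OF cont]) auto
  ultimately show ?thesis
    unfolding lipschitz_nondiff_eq_gaps[OF lip]
    by (simp add: negligible_iff_null_sets null_sets_completion_iff)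
qed

lemma lipschitz_AE_differentiable:
  fixes f :: "real \<Rightarrow> real"
  assumes "K-lipschitz_on UNIV f"
  shows "AE x in lborel. f differentiable (at x)"
  by (rule AE_I'[OF lipschitz_nondiff_null[OF assms]]) auto

lemma deriv_undefined:
  fixes f :: "real \<Rightarrow> real"
  assumes "\<not> f differentiable (at x)"
  shows "deriv f x = (SOME D::real. False)"
proof -
  have "(\<lambda>D. (f has_field_derivative D) (at x)) = (\<lambda>D. False)"
    using assms by (auto simp: real_differentiable_def)
  then show ?thesis by (simp add: deriv_def)
qed

lemma inverse_Suc_at_right_0: "filterlim (\<lambda>n. inverse (real (Suc n))) (at_right 0) sequentially"
  by (rule tendsto_imp_filterlim_at_right[OF LIMSEQ_inverse_real_of_nat]) auto

lemma deriv_as_limit: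
  fixes f :: "real \<Rightarrow> real"
  assumes "f differentiable (at x)"
  shows "(\<lambda>n. right_quot f x (inverse (real (Suc n)))) \<longlonglongrightarrow> deriv f x"
proof -
  have "(f has_field_derivative deriv f x) (at x)"
    using assms by (simp add: DERIV_deriv_iff_real_differentiable)
  then have "(right_quot f x \<longlongrightarrow> deriv f x) (at_right 0)"
    by (simp add: has_field_derivative_iff_quots)
  then show ?thesis by (rule filterlim_compose[OF _ inverse_Suc_at_right_0])
qed

text \<open>The derivative of a Lipschitz function is Borel measurable: it is the pointwise limit of
  difference quotients, corrected on the Borel null set of non-differentiability points.\<close>
lemma lipschitz_deriv_measurable:
  fixes f :: "real \<Rightarrow> real"
  assumes lip: "K-lipschitz_on UNIV f"
  shows "deriv f \<in> borel_measurable borel"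
proof (rule borel_measurable_LIMSEQ_real)
  define N where "N = {x. \<not> f differentiable (at x)}"
  have [measurable]: "N \<in> sets borel"
    using lipschitz_nondiff_null[OF lip] by (simp add: N_def null_sets_def)
  have [measurable]: "f \<in> borel_measurable borel"
    by (rule borel_measurable_continuous_onI[OF lipschitz_on_continuous_on[OF lip]])
  define u where "u n x = (if x \<in> N then (SOME D::real. False) else right_quot f x (inverse (real (Suc n))))"
    for n x
  show "u n \<in> borel_measurable borel" for n unfolding u_def right_quot_def by measurable
  show "(\<lambda>n. u n x) \<longlonglongrightarrow> deriv f x" for x
    by (cases "x \<in> N") (simp_all add: u_def N_def deriv_undefined deriv_as_limit del: of_nat_Suc)
qed

lemma lipschitz_deriv_bound:
  fixes f :: "real \<Rightarrow> real"
  assumes lip: "K-lipschitz_on UNIV f" and "f differentiable (at x)"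
  shows "\<bar>deriv f x\<bar> \<le> K"
proof -
  have "(\<lambda>n. \<bar>right_quot f x (inverse (real (Suc n)))\<bar>) \<longlonglongrightarrow> \<bar>deriv f x\<bar>"
    by (rule tendsto_rabs[OF deriv_as_limit[OF assms(2)]])
  then show ?thesis by (rule LIMSEQ_le_const2) (auto intro!: lipschitz_quot_bounds(1)[OF lip])
qed

lemma integral_dominated_convergence_at:
  fixes s :: "real \<Rightarrow> 'a \<Rightarrow> real" and w f :: "'a \<Rightarrow> real"
  assumes "f \<in> borel_measurable M" "\<And>t. s t \<in> borel_measurable M" "integrable M w"
    and lim: "AE x in M. ((\<lambda>t. s t x) \<longlongrightarrow> f x) (at t0)"
    and bound: "\<forall>\<^sub>F t in at t0. AE x in M. norm (s t x) \<le> w x"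
  shows "((\<lambda>t. integral\<^sup>L M (s t)) \<longlongrightarrow> integral\<^sup>L M f) (at t0)"
  unfolding tendsto_at_iff_sequentially comp_def
proof (intro allI impI)
  fix X :: "nat \<Rightarrow> real" assume "\<forall>i. X i \<in> UNIV - {t0}" "X \<longlonglongrightarrow> t0"
  then have X: "filterlim X (at t0) sequentially" by (intro filterlim_atI) auto
  from filterlim_iff[THEN iffD1, OF X, rule_format, OF bound]
  obtain n0 where w: "\<And>n. n0 \<le> n \<Longrightarrow> AE x in M. norm (s (X n) x) \<le> w x"
    by (auto simp: eventually_sequentially)
  show "(\<lambda>n. integral\<^sup>L M (s (X n))) \<longlonglongrightarrow> integral\<^sup>L M f"
  proof (rule LIMSEQ_offset, rule integral_dominated_convergence)
    show "AE x in M. norm (s (X (n + n0)) x) \<le> w x" for n by (rule w) auto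
    show "AE x in M. (\<lambda>n. s (X (n + n0)) x) \<longlonglongrightarrow> f x"
      using lim
    proof eventually_elim
      case (elim x)
      then show ?case by (intro LIMSEQ_ignore_initial_segment filterlim_compose[OF _ X])
    qed
  qed (use assms in auto)
qed

lemma continuous_antiderivative:
  fixes f :: "real \<Rightarrow> real"
  assumes "continuous_on UNIV f"
  obtains G where "\<And>y. (G has_real_derivative f y) (at y)"
proof -
  have "\<exists>G. \<forall>y::real. -\<infinity> < y \<longrightarrow> y < \<infinity> \<longrightarrow> (G has_vector_derivative f y) (at y)"
    using assms by (intro einterval_antiderivative) (auto simp: continuous_on_eq_continuous_at)
  then show ?thesis using that by (auto simp: has_real_derivative_iff_has_vector_derivative)
qed

lemma integral_right_quot:
  fixes f G :: "real \<Rightarrow> real"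
  assumes cont: "continuous_on UNIV f" and G: "\<And>y. (G has_real_derivative f y) (at y)"
    and ab: "a \<le> b"
  shows "(LINT x:{a<..<b}|lborel. right_quot f x h) = right_quot G b h - right_quot G a h"
proof -
  have "(LBINT x=a..b. right_quot f x h) = right_quot G b h - right_quot G a h"
  proof (rule interval_integral_FTC_finite)
    show "continuous_on {min a b..max a b} (\<lambda>x. right_quot f x h)"
      unfolding right_quot_def divide_inverse
      by (intro continuous_intros continuous_on_compose2[OF cont]) auto
    fix x
    have "((\<lambda>x. right_quot G x h) has_real_derivative right_quot f x h) (at x)"
      unfolding right_quot_def
      by (intro DERIV_cdivide DERIV_diff G DERIV_shift[THEN iffD1])
    then show "((\<lambda>x. right_quot G x h) has_vector_derivative right_quot f x h) (at x within {min a b..max a b})"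
      by (simp add: has_real_derivative_iff_has_vector_derivative has_vector_derivative_at_within)
  qed
  then show ?thesis using ab by (simp add: interval_lebesgue_integral_def einterval_eq)
qed

text \<open>The difference quotients
  converge to it almost everywhere, and are dominated by the Lipschitz constant.\<close>
theorem lipschitz_integral_deriv:
  fixes f :: "real \<Rightarrow> real"
  assumes lip: "K-lipschitz_on UNIV f" and ab: "a \<le> b"
  shows "set_integrable lborel {a<..<b} (deriv f)"
    and "(LINT x:{a<..<b}|lborel. deriv f x) = f b - f a"
proof -
  have cont: "continuous_on UNIV f" by (rule lipschitz_on_continuous_on[OF lip])
  obtain G where G: "\<And>y. (G has_real_derivative f y) (at y)"
    using continuous_antiderivative[OF cont] by blast
  define h where "h n = inverse (real (Suc n))" for n
  define s where "s n x = indicator {a<..<b} x *\<^sub>R right_quot f x (h n)" for n x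
  have [measurable]: "f \<in> borel_measurable borel" by (rule borel_measurable_continuous_onI[OF cont])
  have [measurable]: "deriv f \<in> borel_measurable borel" by (rule lipschitz_deriv_measurable[OF lip])
  have meas: "(\<lambda>x. indicator {a<..<b} x *\<^sub>R deriv f x) \<in> borel_measurable lborel"
    "s n \<in> borel_measurable lborel" for n
    unfolding s_def right_quot_def by measurable
  have dom: "integrable lborel (\<lambda>x. K * indicator {a<..<b} x)"
    using ab by (intro integrable_mult_right integrable_real_indicator) (auto simp: emeasure_lborel_Ioo)
  have lim: "AE x in lborel. (\<lambda>n. s n x) \<longlonglongrightarrow> indicator {a<..<b} x *\<^sub>R deriv f x"
    using lipschitz_AE_differentiable[OF lip]
  proof eventually_elim
    case (elim x)
    show ?case unfolding s_def h_def by (intro tendsto_scaleR tendsto_const deriv_as_limit elim)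
  qed
  have bound: "AE x in lborel. norm (s n x) \<le> K * indicator {a<..<b} x" for n
    using lipschitz_quot_bounds(1)[OF lip, of "h n"] lipschitz_on_nonneg[OF lip]
    by (auto simp: s_def h_def indicator_def)
  show "set_integrable lborel {a<..<b} (deriv f)"
    unfolding set_integrable_def by (rule integrable_dominated_convergence[OF meas dom lim bound])
  have "(\<lambda>n. LINT x|lborel. s n x) \<longlonglongrightarrow> (LINT x:{a<..<b}|lborel. deriv f x)"
    unfolding set_lebesgue_integral_def by (rule integral_dominated_convergence[OF meas dom lim bound])
  moreover have "(\<lambda>n. LINT x|lborel. s n x) \<longlonglongrightarrow> f b - f a"
  proof -
    have "(\<lambda>n. right_quot G y (h n)) \<longlonglongrightarrow> f y" for y
    proof -
      have "(right_quot G y \<longlongrightarrow> f y) (at_right 0)" using G by (simp add: has_field_derivative_iff_quots)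
      then show ?thesis unfolding h_def by (rule filterlim_compose[OF _ inverse_Suc_at_right_0])
    qed
    then have "(\<lambda>n. right_quot G b (h n) - right_quot G a (h n)) \<longlonglongrightarrow> f b - f a"
      by (intro tendsto_diff)
    moreover have "(LINT x|lborel. s n x) = right_quot G b (h n) - right_quot G a (h n)" for n
      using integral_right_quot[OF cont G ab] by (simp add: s_def set_lebesgue_integral_def)
    ultimately show ?thesis by simp
  qed
  ultimately show "(LINT x:{a<..<b}|lborel. deriv f x) = f b - f a" by (rule LIMSEQ_unique)
qed

lemma continuous_bounded_on_Icc:
  fixes g :: "real \<Rightarrow> real"
  assumes "continuous_on UNIV g"
  obtains M where "\<And>y. y \<in> {c..d} \<Longrightarrow> \<bar>g y\<bar> \<le> M"
proof -
  have "bounded (g ` {c..d})"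
    by (intro compact_imp_bounded compact_continuous_image continuous_on_subset[OF assms]) auto
  then obtain M where "\<forall>z \<in> g ` {c..d}. \<bar>z\<bar> \<le> M" unfolding bounded_real by blast
  then have "\<And>y. y \<in> {c..d} \<Longrightarrow> \<bar>g y\<bar> \<le> M" by blast
  then show ?thesis by (rule that)
qed

lemma difference_quotient_bound:
  fixes \<phi> \<phi>' :: "real \<Rightarrow> real"
  assumes d\<phi>: "\<And>x. (\<phi> has_real_derivative \<phi>' x) (at x)"
    and M: "\<And>y. y \<in> {\<alpha> - B..\<alpha> + B} \<Longrightarrow> \<bar>\<phi>' y\<bar> \<le> M"
    and t: "\<bar>t\<bar> \<le> 1" "t \<noteq> 0" and z: "\<bar>z\<bar> \<le> B"
  shows "\<bar>(\<phi> (\<alpha> + t * z) - \<phi> \<alpha>) / t\<bar> \<le> M * B"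
proof -
  have tz: "\<bar>t * z\<bar> \<le> B" using mult_mono[OF t(1) z] by (simp add: abs_mult)
  have M0: "0 \<le> M" using M[of \<alpha>] z by fastforce
  have "norm (\<phi> (\<alpha> + t * z) - \<phi> \<alpha>) \<le> M * norm ((\<alpha> + t * z) - \<alpha>)"
  proof (rule field_differentiable_bound[of "{\<alpha> - B..\<alpha> + B}"])
    show "(\<phi> has_field_derivative \<phi>' y) (at y within {\<alpha> - B..\<alpha> + B})" for y
      by (rule has_field_derivative_at_within[OF d\<phi>])
    show "norm (\<phi>' y) \<le> M" if "y \<in> {\<alpha> - B..\<alpha> + B}" for y using M[OF that] by simp
    show "\<alpha> + t * z \<in> {\<alpha> - B..\<alpha> + B}" "\<alpha> \<in> {\<alpha> - B..\<alpha> + B}"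
      using tz z by (auto simp: abs_le_iff)
  qed simp
  then have "\<bar>(\<phi> (\<alpha> + t * z) - \<phi> \<alpha>) / t\<bar> \<le> M * \<bar>z\<bar>"
    using t(2) by (simp add: abs_divide abs_mult divide_le_eq mult_ac)
  also have "\<dots> \<le> M * B" using z M0 by (rule mult_left_mono)
  finally show ?thesis .
qed

lemma integrable_indicator_comp_bounded:
  fixes \<phi> w :: "real \<Rightarrow> real"
  assumes c\<phi>: "continuous_on UNIV \<phi>" and [measurable]: "w \<in> borel_measurable borel"
    and w_bound: "AE x in lborel. \<bar>w x\<bar> \<le> B"
    and S: "S \<in> sets borel" "emeasure lborel S < \<infinity>"
  shows "integrable lborel (\<lambda>x. indicator S x * \<phi> (\<alpha> + t * w x))"
proof -
  have [measurable]: "\<phi> \<in> borel_measurable borel" "S \<in> sets borel"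
    using borel_measurable_continuous_onI[OF c\<phi>] S(1) by auto
  obtain C where C: "\<And>y. y \<in> {\<alpha> - \<bar>t\<bar> * B..\<alpha> + \<bar>t\<bar> * B} \<Longrightarrow> \<bar>\<phi> y\<bar> \<le> C"
    using continuous_bounded_on_Icc[OF c\<phi>] by blast
  show ?thesis
  proof (rule Bochner_Integration.integrable_bound)
    show "integrable lborel (\<lambda>x. indicator S x * C)"
      using S by (intro integrable_mult_left integrable_real_indicator) auto
    show "(\<lambda>x. indicator S x * \<phi> (\<alpha> + t * w x)) \<in> borel_measurable lborel" by measurable
    show "AE x in lborel. norm (indicator S x * \<phi> (\<alpha> + t * w x)) \<le> norm (indicator S x * C)"
      using w_bound
    proof eventually_elim
      case (elim x)
      then have "\<bar>t * w x\<bar> \<le> \<bar>t\<bar> * B" by (simp add: abs_mult mult_left_mono)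
      then have "\<bar>\<phi> (\<alpha> + t * w x)\<bar> \<le> C" by (intro C) (auto simp: abs_le_iff)
      then show ?case by (auto simp: indicator_def)
    qed
  qed
qed

text \<open>Differentiation under the integral sign for integrands of the form phi(alpha + t w(x))
  over a set of finite measure, with w measurable and essentially bounded and phi
  continuously differentiable; the difference quotients are dominated by the mean value
  estimate.\<close>
lemma has_real_derivative_set_integral:
  fixes \<phi> \<phi>' w :: "real \<Rightarrow> real" and S :: "real set"
  assumes d\<phi>: "\<And>x. (\<phi> has_real_derivative \<phi>' x) (at x)" and c\<phi>': "continuous_on UNIV \<phi>'"
    and w: "w \<in> borel_measurable borel" and w_bound: "AE x in lborel. \<bar>w x\<bar> \<le> B"
    and S: "S \<in> sets borel" "emeasure lborel S < \<infinity>"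
  shows "((\<lambda>t. LINT x:S|lborel. \<phi> (\<alpha> + t * w x)) has_real_derivative
      (LINT x:S|lborel. \<phi>' \<alpha> * w x)) (at 0)"
proof -
  have c\<phi>: "continuous_on UNIV \<phi>"
    using d\<phi> by (auto simp: continuous_on_eq_continuous_at intro: DERIV_isCont)
  have [measurable]: "\<phi> \<in> borel_measurable borel" "w \<in> borel_measurable borel" "S \<in> sets borel"
    using borel_measurable_continuous_onI[OF c\<phi>] w S(1) by auto
  obtain M where M: "\<And>y. y \<in> {\<alpha> - B..\<alpha> + B} \<Longrightarrow> \<bar>\<phi>' y\<bar> \<le> M"
    using continuous_bounded_on_Icc[OF c\<phi>'] by blast
  note integrable = integrable_indicator_comp_bounded[OF c\<phi> w w_bound S]
  define G where "G t = (LINT x:S|lborel. \<phi> (\<alpha> + t * w x))" for t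
  have quotient: "(G t - G 0) / (t - 0) =
      (LINT x|lborel. indicator S x * ((\<phi> (\<alpha> + t * w x) - \<phi> \<alpha>) / t))" for t
  proof -
    have "(G t - G 0) / (t - 0) = ((LINT x|lborel. indicator S x * \<phi> (\<alpha> + t * w x)) -
        (LINT x|lborel. indicator S x * \<phi> (\<alpha> + 0 * w x))) / t"
      by (simp add: G_def set_lebesgue_integral_def)
    also have "\<dots> = (LINT x|lborel. indicator S x * \<phi> (\<alpha> + t * w x) -
        indicator S x * \<phi> (\<alpha> + 0 * w x)) / t"
      by (simp only: Bochner_Integration.integral_diff[OF integrable integrable])
    also have "\<dots> = (LINT x|lborel. (indicator S x * \<phi> (\<alpha> + t * w x) -
        indicator S x * \<phi> (\<alpha> + 0 * w x)) / t)"
      by (rule integral_divide_zero[symmetric])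
    also have "\<dots> = (LINT x|lborel. indicator S x * ((\<phi> (\<alpha> + t * w x) - \<phi> \<alpha>) / t))"
      by (simp add: right_diff_distrib)
    finally show ?thesis .
  qed
  have pointwise: "((\<lambda>t. (\<phi> (\<alpha> + t * w x) - \<phi> \<alpha>) / t) \<longlongrightarrow> \<phi>' \<alpha> * w x) (at 0)" for x
  proof -
    have "((\<lambda>t. \<phi> (\<alpha> + t * w x)) has_real_derivative \<phi>' (\<alpha> + 0 * w x) * w x) (at 0)"
      by (rule DERIV_chain2[OF d\<phi>]) (auto intro!: derivative_eq_intros)
    then show ?thesis by (simp add: has_field_derivative_iff)
  qed
  have near_0: "\<forall>\<^sub>F t in at (0::real). \<bar>t\<bar> \<le> 1 \<and> t \<noteq> 0"
    by (auto simp: eventually_at dist_real_def intro!: exI[of _ 1])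
  have "((\<lambda>t. LINT x|lborel. indicator S x * ((\<phi> (\<alpha> + t * w x) - \<phi> \<alpha>) / t)) \<longlongrightarrow>
      (LINT x|lborel. indicator S x * (\<phi>' \<alpha> * w x))) (at 0)"
  proof (rule integral_dominated_convergence_at[where w = "\<lambda>x. indicator S x * (M * B)"])
    show "AE x in lborel. ((\<lambda>t. indicator S x * ((\<phi> (\<alpha> + t * w x) - \<phi> \<alpha>) / t)) \<longlongrightarrow>
        indicator S x * (\<phi>' \<alpha> * w x)) (at 0)"
      by (intro AE_I2 tendsto_mult tendsto_const pointwise)
    show "\<forall>\<^sub>F t in at 0. AE x in lborel.
        norm (indicator S x * ((\<phi> (\<alpha> + t * w x) - \<phi> \<alpha>) / t)) \<le> indicator S x * (M * B)"
      using near_0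
    proof eventually_elim
      case (elim t)
      show ?case using w_bound
        by eventually_elim (use difference_quotient_bound[OF d\<phi> M] elim in \<open>auto simp: indicator_def\<close>)
    qed
    show "(\<lambda>x. indicator S x * (\<phi>' \<alpha> * w x)) \<in> borel_measurable lborel"
      "(\<lambda>x. indicator S x * ((\<phi> (\<alpha> + t * w x) - \<phi> \<alpha>) / t)) \<in> borel_measurable lborel"
      "integrable lborel (\<lambda>x. indicator S x * (M * B))" for t
      using S by (measurable, measurable, intro integrable_mult_left integrable_real_indicator, auto)
  qed
  then have "((\<lambda>t. (G t - G 0) / (t - 0)) \<longlongrightarrow> (LINT x:S|lborel. \<phi>' \<alpha> * w x)) (at 0)"
    by (simp only: quotient set_lebesgue_integral_def real_scaleR_def)
  then show ?thesis by (simp only: has_field_derivative_iff G_def)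
qed

text \<open>The first variation of a single bond (i, r) at the linear deformation F x in direction v.
  Both the exact and the continuum contribution of a bond have this derivative.\<close>
definition bond_variation :: "(real \<Rightarrow> real) \<Rightarrow> real \<Rightarrow> (real \<Rightarrow> real) \<Rightarrow> int \<times> nat \<Rightarrow> real" where
  "bond_variation \<phi>' F v b =
     \<phi>' (F * real (snd b)) * (v (real_of_int (fst b) + real (snd b)) - v (real_of_int (fst b)))"

lemma e_bond_variation:
  fixes \<phi> \<phi>' v :: "real \<Rightarrow> real"
  assumes d\<phi>: "\<And>x. (\<phi> has_real_derivative \<phi>' x) (at x)"
  shows "((\<lambda>t. e_bond \<phi> (\<lambda>x. F * x + t * v x) b) has_real_derivative bond_variation \<phi>' F v b) (at 0)"
proof -
  define i r where "i = real_of_int (fst b)" and "r = real (snd b)"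
  have "((\<lambda>t. \<phi> ((F * (i + r) + t * v (i + r)) - (F * i + t * v i))) has_real_derivative
      \<phi>' ((F * (i + r) + 0 * v (i + r)) - (F * i + 0 * v i)) * (v (i + r) - v i)) (at 0)"
    by (rule DERIV_chain2[OF d\<phi>]) (auto intro!: derivative_eq_intros)
  then show ?thesis by (simp add: e_bond_def bond_variation_def i_def r_def algebra_simps)
qed

lemma lipschitz_on_clamp:
  fixes f :: "real \<Rightarrow> real"
  assumes "L-lipschitz_on {a..b} f" "a \<le> b"
  shows "L-lipschitz_on UNIV (\<lambda>x. f (max a (min b x)))"
proof (rule lipschitz_onI)
  fix x y :: real
  have "dist (f (max a (min b x))) (f (max a (min b y))) \<le> L * dist (max a (min b x)) (max a (min b y))"
    using assms by (intro lipschitz_onD[OF assms(1)]) auto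
  also have "\<dots> \<le> L * dist x y"
    using lipschitz_on_nonneg[OF assms(1)]
    by (intro mult_left_mono) (auto simp: dist_real_def max_def min_def)
  finally show "dist (f (max a (min b x))) (f (max a (min b y))) \<le> L * dist x y" .
qed (rule lipschitz_on_nonneg[OF assms(1)])

lemma continuum_bond_position:
  assumes "b \<in> bonds N R" "bond_set b \<subseteq> Omega_c N"
  shows "0 \<le> fst b" "fst b + int (snd b) \<le> int N"
proof -
  have "1 \<le> snd b" using assms(1) by (auto simp: bonds_def)
  then have "0 \<le> real_of_int (fst b) \<and> real_of_int (fst b) + real (snd b) \<le> real N"
    using assms(2) by (simp add: bond_set_def Omega_c_def greaterThanLessThan_subseteq_greaterThanLessThan)
  then show "0 \<le> fst b" "fst b + int (snd b) \<le> int N" by linarith+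
qed

lemma c_bond_perturbed:
  fixes \<phi> v vb :: "real \<Rightarrow> real"
  assumes lipb: "L-lipschitz_on UNIV vb" and agree: "\<And>x. x \<in> Omega_c N \<Longrightarrow> v x = vb x"
    and b: "bond_set b \<subseteq> Omega_c N" and [measurable]: "\<phi> \<in> borel_measurable borel"
  shows "c_bond \<phi> N (\<lambda>x. F * x + t * v x) b = (1 / real (snd b)) *
      (LINT x:bond_set b|lborel. \<phi> (real (snd b) * F + t * (real (snd b) * deriv vb x)))"
proof -
  let ?r = "real (snd b)"
  have [measurable]: "bond_set b \<in> sets borel" by (simp add: bond_set_def)
  have "(LINT x:bond_set b|lborel. \<phi> (?r * deriv (\<lambda>x. F * x + t * v x) x)) =
        (LINT x:bond_set b|lborel. \<phi> (?r * deriv (\<lambda>x. F * x + t * vb x) x))"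
  proof (rule set_lebesgue_integral_cong)
    have "deriv (\<lambda>x. F * x + t * v x) x = deriv (\<lambda>x. F * x + t * vb x) x" if "x \<in> Omega_c N" for x
    proof -
      have "\<forall>\<^sub>F y in nhds x. y \<in> Omega_c N"
        using that by (intro eventually_nhds_in_open) (auto simp: Omega_c_def)
      then have "\<forall>\<^sub>F y in nhds x. F * y + t * v y = F * y + t * vb y" by eventually_elim (simp add: agree)
      then show ?thesis by (rule deriv_cong_ev) simp
    qed
    then show "\<forall>x. x \<in> bond_set b \<longrightarrow>
        \<phi> (?r * deriv (\<lambda>x. F * x + t * v x) x) = \<phi> (?r * deriv (\<lambda>x. F * x + t * vb x) x)"
      using b by auto
  qed simp
  also have "\<dots> = (LINT x:bond_set b|lborel. \<phi> (?r * F + t * (?r * deriv vb x)))"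
  proof (rule set_lebesgue_integral_cong_AE)
    have "(\<bar>F\<bar> * 1 + \<bar>t\<bar> * L)-lipschitz_on UNIV (\<lambda>x. F * x + t * vb x)"
      by (intro lipschitz_on_add lipschitz_on_cmult_real lipschitz_on_id lipb)
    note D = lipschitz_deriv_measurable[OF this] lipschitz_deriv_measurable[OF lipb]
    show "(\<lambda>x. \<phi> (?r * deriv (\<lambda>x. F * x + t * vb x) x)) \<in> borel_measurable lborel"
      "(\<lambda>x. \<phi> (?r * F + t * (?r * deriv vb x))) \<in> borel_measurable lborel"
      using D by (auto intro!: measurable_compose[where g = \<phi>] borel_measurable_times borel_measurable_add)
    show "AE x\<in>bond_set b in lborel. \<phi> (?r * deriv (\<lambda>x. F * x + t * vb x) x) = \<phi> (?r * F + t * (?r * deriv vb x))"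
      using lipschitz_AE_differentiable[OF lipb]
    proof eventually_elim
      case (elim x)
      then have "((\<lambda>x. F * x + t * vb x) has_real_derivative F + t * deriv vb x) (at x)"
        by (auto simp: DERIV_deriv_iff_real_differentiable[symmetric] intro!: derivative_eq_intros)
      then show ?case by (simp add: DERIV_imp_deriv algebra_simps)
    qed
  qed simp
  finally show ?thesis using b by (simp add: c_bond_def Int_absorb2)
qed

text \<open>Continuum bonds: differentiate under the integral sign, then integrate the derivative of v
  back with the fundamental theorem of calculus for Lipschitz functions.\<close>
lemma c_bond_variation:
  fixes \<phi> \<phi>' v :: "real \<Rightarrow> real"
  assumes d\<phi>: "\<And>x. (\<phi> has_real_derivative \<phi>' x) (at x)" and c\<phi>': "continuous_on UNIV \<phi>'"
    and lip: "L-lipschitz_on {0..real N} v"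
    and b: "b \<in> bonds N R" "bond_set b \<subseteq> Omega_c N"
  shows "((\<lambda>t. c_bond \<phi> N (\<lambda>x. F * x + t * v x) b) has_real_derivative bond_variation \<phi>' F v b) (at 0)"
proof -
  define vb where "vb x = v (max 0 (min (real N) x))" for x
  define a r where "a = real_of_int (fst b)" and "r = real (snd b)"
  have lipb: "L-lipschitz_on UNIV vb" unfolding vb_def by (rule lipschitz_on_clamp[OF lip]) simp
  have agree: "v x = vb x" if "0 \<le> x" "x \<le> real N" for x using that by (simp add: vb_def)
  have r: "r > 0" using b(1) by (auto simp: bonds_def r_def)
  have ends: "0 \<le> a" "a + r \<le> real N"
    using continuum_bond_position[OF b] by (simp_all add: a_def r_def)
  have S: "bond_set b = {a<..<a + r}" by (simp add: bond_set_def a_def r_def)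
  have [measurable]: "\<phi> \<in> borel_measurable borel"
    using d\<phi> by (intro borel_measurable_continuous_onI)
      (auto simp: continuous_on_eq_continuous_at intro: DERIV_isCont)
  have [measurable]: "deriv vb \<in> borel_measurable borel" by (rule lipschitz_deriv_measurable[OF lipb])
  have bound: "AE x in lborel. \<bar>r * deriv vb x\<bar> \<le> r * L"
    using lipschitz_AE_differentiable[OF lipb]
    by eventually_elim (use r lipschitz_deriv_bound[OF lipb] in \<open>simp add: abs_mult\<close>)
  have integral_deriv: "((\<lambda>t. LINT x:bond_set b|lborel. \<phi> (r * F + t * (r * deriv vb x))) has_real_derivative
      (LINT x:bond_set b|lborel. \<phi>' (r * F) * (r * deriv vb x))) (at 0)"
    by (rule has_real_derivative_set_integral[OF d\<phi> c\<phi>' _ bound]) (use r in \<open>auto simp: S emeasure_lborel_Ioo\<close>)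
  then have "((\<lambda>t. c_bond \<phi> N (\<lambda>x. F * x + t * v x) b) has_real_derivative
      (1 / r) * (LINT x:bond_set b|lborel. \<phi>' (r * F) * (r * deriv vb x))) (at 0)"
  proof -
    have energy: "c_bond \<phi> N (\<lambda>x. F * x + t * v x) b =
        (1 / r) * (LINT x:bond_set b|lborel. \<phi> (r * F + t * (r * deriv vb x)))" for t
      unfolding r_def by (rule c_bond_perturbed[OF lipb _ b(2)]) (auto simp: Omega_c_def agree)
    show ?thesis unfolding energy by (rule DERIV_cmult[OF integral_deriv])
  qed
  also have "(1 / r) * (LINT x:bond_set b|lborel. \<phi>' (r * F) * (r * deriv vb x)) =
      \<phi>' (r * F) * (LINT x:{a<..<a + r}|lborel. deriv vb x)"
    using r by (simp add: S set_integral_mult_right)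
  also have "\<dots> = bond_variation \<phi>' F v b"
    using lipschitz_integral_deriv(2)[OF lipb, of a "a + r"] r ends
    by (simp add: bond_variation_def a_def r_def agree mult.commute)
  finally show ?thesis .
qed

lemma sum_bond_endpoints:
  fixes u :: "int \<Rightarrow> real"
  assumes dir: "\<And>j. j \<in> dirichlet_sites N R \<Longrightarrow> u j = 0" and r: "1 \<le> r" "r \<le> R"
  defines "A \<equiv> {i. i \<in> sites N R \<and> i + int r \<in> sites N R}"
  shows "(\<Sum>i\<in>A. u i) = (\<Sum>j | \<bar>j\<bar> < int N. u j)"
    and "(\<Sum>i\<in>A. u (i + int r)) = (\<Sum>j | \<bar>j\<bar> < int N. u j)"
proof -
  let ?Z = "{j::int. \<bar>j\<bar> < int N}"
  have finA: "finite A" by (rule finite_subset[of _ "{-(int N + int R)..int N + int R}"]) (auto simp: A_def sites_def)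
  show "(\<Sum>i\<in>A. u i) = (\<Sum>j\<in>?Z. u j)"
  proof (rule sum.mono_neutral_right[OF finA])
    show "?Z \<subseteq> A" using r by (auto simp: A_def sites_def)
    show "\<forall>i\<in>A - ?Z. u i = 0" by (auto simp: A_def sites_def dirichlet_sites_def intro!: dir)
  qed
  have "(\<Sum>i\<in>A. u (i + int r)) = (\<Sum>j\<in>(\<lambda>i. i + int r) ` A. u j)"
    by (simp add: sum.reindex)
  also have "\<dots> = (\<Sum>j\<in>?Z. u j)"
  proof (rule sum.mono_neutral_right)
    show "finite ((\<lambda>i. i + int r) ` A)" using finA by simp
    show "?Z \<subseteq> (\<lambda>i. i + int r) ` A"
    proof
      fix j assume "j \<in> ?Z"
      then have "j - int r \<in> A" using r by (auto simp: A_def sites_def)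
      then show "j \<in> (\<lambda>i. i + int r) ` A" by (rule rev_image_eqI) simp
    qed
    show "\<forall>j\<in>(\<lambda>i. i + int r) ` A - ?Z. u j = 0"
      by (auto simp: A_def sites_def dirichlet_sites_def intro!: dir)
  qed
  finally show "(\<Sum>i\<in>A. u (i + int r)) = (\<Sum>j\<in>?Z. u j)" .
qed

lemma bond_increments_sum_zero:
  fixes u :: "int \<Rightarrow> real" and c :: "nat \<Rightarrow> real"
  assumes dir: "\<And>j. j \<in> dirichlet_sites N R \<Longrightarrow> u j = 0"
  shows "(\<Sum>b\<in>bonds N R. c (snd b) * (u (fst b + int (snd b)) - u (fst b))) = 0"
proof -
  define A where "A r = {i. i \<in> sites N R \<and> i + int r \<in> sites N R}" for r
  have finA: "finite (A r)" for r
    by (rule finite_subset[of _ "{-(int N + int R)..int N + int R}"]) (auto simp: A_def sites_def)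
  have bonds_eq: "bonds N R = (\<lambda>(r, i). (i, r)) ` (SIGMA r:{1..R}. A r)"
    by (auto simp: bonds_def A_def image_iff)
  have "(\<Sum>b\<in>bonds N R. c (snd b) * (u (fst b + int (snd b)) - u (fst b)))
      = (\<Sum>r\<in>{1..R}. \<Sum>i\<in>A r. c r * (u (i + int r) - u i))"
    unfolding bonds_eq using finA
    by (subst sum.reindex) (auto simp: inj_on_def sum.Sigma case_prod_beta)
  also have "\<dots> = (\<Sum>r\<in>{1..R}. c r * ((\<Sum>i\<in>A r. u (i + int r)) - (\<Sum>i\<in>A r. u i)))"
    by (simp add: sum_distrib_left sum_subtractf right_diff_distrib)
  also have "\<dots> = 0"
  proof (rule sum.neutral, intro ballI)
    fix r assume "r \<in> {1..R}"
    then show "c r * ((\<Sum>i\<in>A r. u (i + int r)) - (\<Sum>i\<in>A r. u i)) = 0"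
      using sum_bond_endpoints[where u = u and r = r, OF dir] by (simp add: A_def)
  qed
  finally show ?thesis .
qed

theorem proposition3p2:
  fixes N R :: nat and \<phi> \<phi>' :: "real \<Rightarrow> real" and F :: real and v :: "real \<Rightarrow> real"
  assumes "N \<ge> 1" and "R \<ge> 1"
    and "\<And>x. (\<phi> has_real_derivative \<phi>' x) (at x)" and "continuous_on UNIV \<phi>'"
    and "F > 0" and "v \<in> adm0 N R"
  shows "((\<lambda>t. E_ecc \<phi> N R (\<lambda>x. F * x + t * v x)) has_real_derivative 0) (at 0)"
proof -
  note d\<phi> = assms(3) and c\<phi>' = assms(4)
  obtain L where lip: "L-lipschitz_on {0..real N} v" using assms(6) by (auto simp: adm0_def adm_def)
  have dir: "\<And>i. i \<in> dirichlet_sites N R \<Longrightarrow> v (real_of_int i) = 0"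
    using assms(6) by (auto simp: adm0_def)
  let ?atomistic = "{b \<in> bonds N R. \<not> bond_set b \<subseteq> Omega_c N}"
  let ?continuum = "{b \<in> bonds N R. bond_set b \<subseteq> Omega_c N}"
  have fin: "finite (bonds N R)"
    by (rule finite_subset[of _ "{-(int N + int R)..int N + int R} \<times> {0..R}"])
      (auto simp: bonds_def sites_def)
  have "((\<lambda>t. E_ecc \<phi> N R (\<lambda>x. F * x + t * v x)) has_real_derivative
      (\<Sum>b\<in>?atomistic. bond_variation \<phi>' F v b) + (\<Sum>b\<in>?continuum. bond_variation \<phi>' F v b)) (at 0)"
    unfolding E_ecc_def
    by (intro DERIV_add DERIV_sum e_bond_variation[OF d\<phi>] c_bond_variation[OF d\<phi> c\<phi>' lip]) auto
  also have "(\<Sum>b\<in>?atomistic. bond_variation \<phi>' F v b) + (\<Sum>b\<in>?continuum. bond_variation \<phi>' F v b)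
      = (\<Sum>b\<in>bonds N R. bond_variation \<phi>' F v b)"
    using fin by (subst sum.union_disjoint[symmetric]) (auto intro: sum.cong)
  also have "\<dots> = 0"
    using bond_increments_sum_zero[of N R "\<lambda>j. v (real_of_int j)" "\<lambda>r. \<phi>' (F * real r)"] dir
    by (simp add: bond_variation_def)
  finally show ?thesis .
qed

end
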